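(* For each $s\in S_n$ and $w\in S_n$, the action of $s$ on the Schubert class $[\Omega_w]\in H^*_T(G/B)$ has the form $$s\cdot[\Omega_w]=[\Omega_w]+\sum_{v<w}c_v[\Omega_v]$$ for some polynomials $c_v\in\mathbb{C}[t_1,\ldots,t_n]$, where each nonzero $c_v$ has degree $\ell(w)-\ell(v)$.
   Context: Let $G=GL_n(\mathbb{C})$, $B$ (resp. $B^-$) the invertible upper- (resp. lower-) triangular matrices, and $T$ the diagonal torus. Permutations are identified with permutation matrices via $we_i=e_{w(i)}$, and $s_{jk}$ is the transposition of $j,k$. The Bruhat order is $v\le w$ iff $BvB/B\subseteq\overline{BwB/B}$. $\mathrm{Inv}(w)=\{t_i-t_j:i<j,\ w^{-1}(i)>w^{-1}(j)\}$ and $\ell(w)=|\mathrm{Inv}(w)|$. In GKM form, $H^*_T(G/B)$ is the ring of tuples $(p_u)_{u\in S_n}$, $p_u\in\mathbb{C}[t_1,\ldots,t_n]$, with $p_u-p_{s_{jk}u}\in\langle t_j-t_k\rangle$ for all $u$ and $j<k$. $S_n$ acts on polynomials by $(u\cdot f)(t_1,\ldots,t_n)=f(t_{u(1)},\ldots,t_{u(n)})$ and on $H^*_T(G/B)$ by $(u\cdot p)_v=u\cdot p_{u^{-1}v}$. The Schubert class $[\Omega_v]=(p^v_u)_u$ is the equivariant class of $\overline{B^-vB/B}$; equivalently, it is the unique class with $p^v_u=0$ unless $u\ge v$, each nonzero $p^v_u$ homogeneous of degree $\ell(v)$, and $p^v_v=\prod_{\beta\in\mathrm{Inv}(v)}\beta$.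 The Schubert classes form a $\mathbb{C}[t_1,\ldots,t_n]$-basis of $H^*_T(G/B)$. *)

theory Defs
  imports Complex_Main "HOL-Library.Poly_Mapping" "HOL-Combinatorics.Combinatorics"
begin

text \<open>Polynomials in the variables t_i (i :: nat) with complex coefficients:
  monomials are finitely supported exponent vectors, polynomials are finitely
  supported coefficient functions on monomials.\<close>
type_synonym mpoly = "(nat \<Rightarrow>\<^sub>0 nat) \<Rightarrow>\<^sub>0 complex"

definition var :: "nat \<Rightarrow> mpoly" where
  "var i = Poly_Mapping.single (Poly_Mapping.single i 1) 1"

definition const :: "complex \<Rightarrow> mpoly" where
  "const c = Poly_Mapping.single 0 c"

definition in_ring :: "nat \<Rightarrow> mpoly \<Rightarrow> bool" where
  "in_ring n f \<longleftrightarrow> (\<forall>m::nat \<Rightarrow>\<^sub>0 nat. m \<in> Poly_Mapping.keys f \<longrightarrow> Poly_Mapping.keys m \<subseteq> {1..n})"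

definition mon_degree :: "(nat \<Rightarrow>\<^sub>0 nat) \<Rightarrow> nat" where
  "mon_degree m = (\<Sum>i\<in>Poly_Mapping.keys m. Poly_Mapping.lookup m i)"

definition homogeneous :: "nat \<Rightarrow> mpoly \<Rightarrow> bool" where
  "homogeneous d f \<longleftrightarrow> (\<forall>m\<in>Poly_Mapping.keys f. mon_degree m = d)"

text \<open>Total degree (of a nonzero polynomial).\<close>
definition total_degree :: "mpoly \<Rightarrow> nat" where
  "total_degree f = Max (mon_degree ` Poly_Mapping.keys f)"

definition subst :: "(nat \<Rightarrow> mpoly) \<Rightarrow> mpoly \<Rightarrow> mpoly" where
  "subst g f = (\<Sum>m\<in>Poly_Mapping.keys f. const (Poly_Mapping.lookup f m) * (\<Prod>i\<in>Poly_Mapping.keys m. g i ^ Poly_Mapping.lookup m i))"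

definition poly_act :: "(nat \<Rightarrow> nat) \<Rightarrow> mpoly \<Rightarrow> mpoly" where
  "poly_act u f = subst (\<lambda>i. var (u i)) f"

definition Sn :: "nat \<Rightarrow> (nat \<Rightarrow> nat) set" where
  "Sn n = {u. u permutes {1..n}}"

definition Inv :: "nat \<Rightarrow> (nat \<Rightarrow> nat) \<Rightarrow> mpoly set" where
  "Inv n w = {var i - var j | i j. 1 \<le> i \<and> i < j \<and> j \<le> n \<and> inv w i > inv w j}"

definition ell :: "nat \<Rightarrow> (nat \<Rightarrow> nat) \<Rightarrow> nat" where
  "ell n w = card (Inv n w)"

definition bruhat_step :: "nat \<Rightarrow> (nat \<Rightarrow> nat) \<Rightarrow> (nat \<Rightarrow> nat) \<Rightarrow> bool" where
  "bruhat_step n v w \<longleftrightarrow> v \<in> Sn n \<and>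
     (\<exists>j k. 1 \<le> j \<and> j < k \<and> k \<le> n \<and> w = transpose j k \<circ> v \<and> ell n v < ell n w)"

definition bruhat_le :: "nat \<Rightarrow> (nat \<Rightarrow> nat) \<Rightarrow> (nat \<Rightarrow> nat) \<Rightarrow> bool" where
  "bruhat_le n v w \<longleftrightarrow> v \<in> Sn n \<and> (bruhat_step n)\<^sup>*\<^sup>* v w"

definition bruhat_less :: "nat \<Rightarrow> (nat \<Rightarrow> nat) \<Rightarrow> (nat \<Rightarrow> nat) \<Rightarrow> bool" where
  "bruhat_less n v w \<longleftrightarrow> bruhat_le n v w \<and> v \<noteq> w"

text \<open>GKM description of H^*_T(G/B): tuples indexed by S_n (values outside S_n are
  irrelevant) with entries in C[t_1..t_n] and p_u - p_{s_{jk}u} in the ideal (t_j - t_k).\<close>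
definition gkm :: "nat \<Rightarrow> ((nat \<Rightarrow> nat) \<Rightarrow> mpoly) \<Rightarrow> bool" where
  "gkm n p \<longleftrightarrow> (\<forall>u\<in>Sn n. in_ring n (p u)) \<and>
     (\<forall>u\<in>Sn n. \<forall>j k. 1 \<le> j \<and> j < k \<and> k \<le> n \<longrightarrow>
        (\<exists>q. in_ring n q \<and> p u - p (transpose j k \<circ> u) = q * (var j - var k)))"

definition weyl_act :: "(nat \<Rightarrow> nat) \<Rightarrow> ((nat \<Rightarrow> nat) \<Rightarrow> mpoly) \<Rightarrow> (nat \<Rightarrow> nat) \<Rightarrow> mpoly" where
  "weyl_act u p v = poly_act u (p (inv u \<circ> v))"

definition is_schubert_class :: "nat \<Rightarrow> (nat \<Rightarrow> nat) \<Rightarrow> ((nat \<Rightarrow> nat) \<Rightarrow> mpoly) \<Rightarrow> bool" where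
  "is_schubert_class n v p \<longleftrightarrow> gkm n p \<and>
     (\<forall>u\<in>Sn n. \<not> bruhat_le n v u \<longrightarrow> p u = 0) \<and>
     (\<forall>u\<in>Sn n. p u \<noteq> 0 \<longrightarrow> homogeneous (ell n v) (p u)) \<and>
     p v = (\<Prod>\<beta>\<in>Inv n v. \<beta>)"

end

theory Submission
  imports Defs
begin

text \<open>For a simple reflection s_i, the class [\<Omega>_w] - s_i [\<Omega>_w] is divisible by the root
  t_i - t_{i+1}, and the quotient is again a GKM class, homogeneous of degree ell(w) - 1.
  Every homogeneous GKM class expands in Schubert classes: at a point u of minimal length in its
  support its value is divisible by the product of the roots in Inv(u), so a multiple of [\<Omega>_u]
  can be subtracted, shrinking the Bruhat up-set of the support. Comparing supports and degrees,
  the quotient is a constant multiple of [\<Omega>_{s_i w}], occurring only when s_i w < w. So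
  s_i [\<Omega>_w] is [\<Omega>_w] plus lower terms with coefficients homogeneous of the right degrees;
  such unitriangular expansions compose, and the s_i generate S_n.\<close>

section \<open>Substitution\<close>

definition subst_monom :: "(nat \<Rightarrow> mpoly) \<Rightarrow> (nat \<Rightarrow>\<^sub>0 nat) \<Rightarrow> mpoly" where
  "subst_monom g m = (\<Prod>i\<in>Poly_Mapping.keys m. g i ^ Poly_Mapping.lookup m i)"

lemma subst_conv_subst_monom:
  "subst g f = (\<Sum>m\<in>Poly_Mapping.keys f. const (Poly_Mapping.lookup f m) * subst_monom g m)"
  unfolding subst_def subst_monom_def by simp

lemma subst_eq_sum_superset:
  assumes "finite A" "Poly_Mapping.keys f \<subseteq> A"
  shows "subst g f = (\<Sum>m\<in>A. const (Poly_Mapping.lookup f m) * subst_monom g m)"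
  unfolding subst_conv_subst_monom
  by (rule sum.mono_neutral_left) (use assms in \<open>auto simp: in_keys_iff const_def\<close>)

lemma subst_monom_eq_prod_superset:
  assumes "finite A" "Poly_Mapping.keys m \<subseteq> A"
  shows "subst_monom g m = (\<Prod>i\<in>A. g i ^ Poly_Mapping.lookup m i)"
  unfolding subst_monom_def
  by (rule prod.mono_neutral_left) (use assms in \<open>auto simp: in_keys_iff\<close>)

lemma const_0 [simp]: "const 0 = 0"
  by (simp add: const_def)

lemma const_1 [simp]: "const 1 = 1"
  by (simp add: const_def)

lemma const_add: "const (a + b) = const a + const b"
  by (simp add: const_def single_add)

lemma const_mult: "const (a * b) = const a * const b"
  by (simp add: const_def mult_single)

lemma const_uminus: "const (- a) = - const a"
  by (simp add: const_def single_uminus)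

lemma poly_mapping_eq_sum_single:
  "f = (\<Sum>m\<in>Poly_Mapping.keys f. Poly_Mapping.single m (Poly_Mapping.lookup f m))"
proof (rule poly_mapping_eqI)
  fix k
  show "Poly_Mapping.lookup f k =
      Poly_Mapping.lookup (\<Sum>m\<in>Poly_Mapping.keys f. Poly_Mapping.single m (Poly_Mapping.lookup f m)) k"
    by (cases "k \<in> Poly_Mapping.keys f") (auto simp: lookup_sum lookup_single when_def in_keys_iff)
qed

lemma subst_0 [simp]: "subst g 0 = 0"
  by (simp add: subst_def)

lemma subst_add: "subst g (f1 + f2) = subst g f1 + subst g f2"
proof -
  let ?A = "Poly_Mapping.keys f1 \<union> Poly_Mapping.keys f2"
  have "subst g (f1 + f2) = (\<Sum>m\<in>?A. const (Poly_Mapping.lookup (f1 + f2) m) * subst_monom g m)"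
    by (rule subst_eq_sum_superset) (use keys_add[of f1 f2] in auto)
  also have "\<dots> = (\<Sum>m\<in>?A. const (Poly_Mapping.lookup f1 m) * subst_monom g m)
                + (\<Sum>m\<in>?A. const (Poly_Mapping.lookup f2 m) * subst_monom g m)"
    by (simp add: lookup_add const_add distrib_right sum.distrib)
  also have "\<dots> = subst g f1 + subst g f2"
    by (simp add: subst_eq_sum_superset[symmetric])
  finally show ?thesis .
qed

lemma subst_uminus: "subst g (- f) = - subst g f"
  by (simp add: subst_conv_subst_monom const_uminus sum_negf)

lemma subst_diff: "subst g (f1 - f2) = subst g f1 - subst g f2"
  using subst_add[of g f1 "- f2"] by (simp add: subst_uminus)

lemma subst_sum: "subst g (sum F A) = (\<Sum>x\<in>A. subst g (F x))"
  by (induction A rule: infinite_finite_induct) (auto simp: subst_add)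

lemma subst_single: "subst g (Poly_Mapping.single m c) = const c * subst_monom g m"
  by (cases "c = 0") (auto simp: subst_conv_subst_monom)

lemma subst_monom_add: "subst_monom g (m1 + m2) = subst_monom g m1 * subst_monom g m2"
proof -
  let ?A = "Poly_Mapping.keys m1 \<union> Poly_Mapping.keys m2"
  have "subst_monom g (m1 + m2) = (\<Prod>i\<in>?A. g i ^ Poly_Mapping.lookup (m1 + m2) i)"
    by (rule subst_monom_eq_prod_superset) (use keys_add[of m1 m2] in auto)
  also have "\<dots> = (\<Prod>i\<in>?A. g i ^ Poly_Mapping.lookup m1 i) * (\<Prod>i\<in>?A. g i ^ Poly_Mapping.lookup m2 i)"
    by (simp add: lookup_add power_add prod.distrib)
  also have "\<dots> = subst_monom g m1 * subst_monom g m2"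
    by (simp add: subst_monom_eq_prod_superset[symmetric])
  finally show ?thesis .
qed

lemma subst_mult: "subst g (f1 * f2) = subst g f1 * subst g f2"
proof -
  have "f1 * f2 = (\<Sum>a\<in>Poly_Mapping.keys f1. \<Sum>b\<in>Poly_Mapping.keys f2.
      Poly_Mapping.single (a + b) (Poly_Mapping.lookup f1 a * Poly_Mapping.lookup f2 b))"
    by (subst poly_mapping_eq_sum_single[of f1], subst poly_mapping_eq_sum_single[of f2])
       (simp add: sum_product mult_single)
  then have "subst g (f1 * f2) = (\<Sum>a\<in>Poly_Mapping.keys f1. \<Sum>b\<in>Poly_Mapping.keys f2.
      (const (Poly_Mapping.lookup f1 a) * subst_monom g a) * (const (Poly_Mapping.lookup f2 b) * subst_monom g b))"
    by (simp add: subst_sum subst_single const_mult subst_monom_add ac_simps)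
  also have "\<dots> = subst g f1 * subst g f2"
    by (simp add: subst_conv_subst_monom sum_product)
  finally show ?thesis .
qed

lemma subst_const [simp]: "subst g (const c) = const c"
  by (simp add: const_def subst_single subst_monom_def)

lemma subst_1 [simp]: "subst g 1 = 1"
  using subst_const[of g 1] by simp

lemma subst_var [simp]: "subst g (var i) = g i"
  by (simp add: var_def subst_single subst_monom_def)

lemma subst_power: "subst g (f ^ k) = subst g f ^ k"
  by (induction k) (auto simp: subst_mult)

lemma subst_prod: "subst g (prod F A) = (\<Prod>x\<in>A. subst g (F x))"
  by (induction A rule: infinite_finite_induct) (auto simp: subst_mult)

lemma subst_subst: "subst g (subst h f) = subst (\<lambda>i. subst g (h i)) f"
  by (simp only: subst_conv_subst_monom[of h f] subst_conv_subst_monom[of "\<lambda>i. subst g (h i)" f]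
      subst_sum subst_mult subst_const subst_monom_def subst_prod subst_power)

lemma var_power: "var i ^ k = Poly_Mapping.single (Poly_Mapping.single i k) 1"
  by (induction k) (auto simp: var_def mult_single single_add[symmetric])

lemma subst_monom_var: "subst_monom var m = Poly_Mapping.single m 1"
proof -
  have "(\<Prod>i\<in>A. Poly_Mapping.single (Poly_Mapping.single i (Poly_Mapping.lookup m i)) (1::complex))
      = Poly_Mapping.single (\<Sum>i\<in>A. Poly_Mapping.single i (Poly_Mapping.lookup m i)) 1" for A
    by (induction A rule: infinite_finite_induct) (auto simp: mult_single)
  then show ?thesis
    by (simp add: subst_monom_def var_power poly_mapping_eq_sum_single[of m, symmetric])
qed

lemma subst_var_id: "subst var f = f"
  by (subst (2) poly_mapping_eq_sum_single)
     (simp add: subst_conv_subst_monom subst_monom_var const_def mult_single)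

section \<open>The subring C[t_1,...,t_n]\<close>

lemma in_ring_0 [simp]: "in_ring n 0"
  by (simp add: in_ring_def)

lemma in_ring_const [simp]: "in_ring n (const c)"
  by (simp add: in_ring_def const_def)

lemma in_ring_1 [simp]: "in_ring n 1"
  using in_ring_const[of n 1] by simp

lemma in_ring_var: "i \<in> {1..n} \<Longrightarrow> in_ring n (var i)"
  by (simp add: in_ring_def var_def)

lemma in_ring_add: "in_ring n f \<Longrightarrow> in_ring n g \<Longrightarrow> in_ring n (f + g)"
  unfolding in_ring_def using keys_add[of f g] by blast

lemma in_ring_uminus: "in_ring n f \<Longrightarrow> in_ring n (- f)"
  unfolding in_ring_def by simp

lemma in_ring_diff: "in_ring n f \<Longrightarrow> in_ring n g \<Longrightarrow> in_ring n (f - g)"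
  using in_ring_add[of n f "- g"] in_ring_uminus[of n g] by simp

lemma keys_add_nat:
  "Poly_Mapping.keys ((a :: nat \<Rightarrow>\<^sub>0 nat) + b) = Poly_Mapping.keys a \<union> Poly_Mapping.keys b"
  by (auto simp: in_keys_iff lookup_add)

lemma in_ring_mult: "in_ring n f \<Longrightarrow> in_ring n g \<Longrightarrow> in_ring n (f * g)"
  unfolding in_ring_def using keys_mult[of f g] by (fastforce simp: keys_add_nat)

lemma in_ring_sum: "(\<And>x. x \<in> A \<Longrightarrow> in_ring n (F x)) \<Longrightarrow> in_ring n (sum F A)"
  by (induction A rule: infinite_finite_induct) (auto intro: in_ring_add)

lemma in_ring_prod: "(\<And>x. x \<in> A \<Longrightarrow> in_ring n (F x)) \<Longrightarrow> in_ring n (prod F A)"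
  by (induction A rule: infinite_finite_induct) (auto intro: in_ring_mult)

lemma in_ring_power: "in_ring n f \<Longrightarrow> in_ring n (f ^ k)"
  by (induction k) (auto intro: in_ring_mult)

lemma in_ring_subst:
  assumes "in_ring n f" "\<And>i. i \<in> {1..n} \<Longrightarrow> in_ring n (g i)"
  shows "in_ring n (subst g f)"
  using assms unfolding subst_def in_ring_def[of n f]
  by (fastforce intro!: in_ring_sum in_ring_mult in_ring_prod in_ring_power)

definition ring_dvd :: "nat \<Rightarrow> mpoly \<Rightarrow> mpoly \<Rightarrow> bool" where
  "ring_dvd n g f \<longleftrightarrow> (\<exists>q. in_ring n q \<and> f = q * g)"

lemma ring_dvd_0 [simp]: "ring_dvd n g 0"
  unfolding ring_dvd_def by (intro exI[of _ 0]) simp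

lemma ring_dvd_mult_left: "in_ring n q \<Longrightarrow> ring_dvd n g (q * g)"
  unfolding ring_dvd_def by blast

lemma ring_dvd_add: "ring_dvd n g f1 \<Longrightarrow> ring_dvd n g f2 \<Longrightarrow> ring_dvd n g (f1 + f2)"
  unfolding ring_dvd_def by (metis distrib_right in_ring_add)

lemma ring_dvd_uminus: "ring_dvd n g f \<Longrightarrow> ring_dvd n g (- f)"
  unfolding ring_dvd_def by (metis minus_mult_left in_ring_uminus)

lemma ring_dvd_diff: "ring_dvd n g f1 \<Longrightarrow> ring_dvd n g f2 \<Longrightarrow> ring_dvd n g (f1 - f2)"
  using ring_dvd_add[of n g f1 "- f2"] ring_dvd_uminus[of n g f2] by simp

lemma ring_dvd_mult: "in_ring n c \<Longrightarrow> ring_dvd n g f \<Longrightarrow> ring_dvd n g (c * f)"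
  unfolding ring_dvd_def by (metis mult.assoc in_ring_mult)

lemma ring_dvd_sum: "(\<And>x. x \<in> A \<Longrightarrow> ring_dvd n g (F x)) \<Longrightarrow> ring_dvd n g (sum F A)"
  by (induction A rule: infinite_finite_induct) (auto intro: ring_dvd_add)

section \<open>Homogeneous polynomials\<close>

lemma mon_degree_eq_sum_superset:
  assumes "finite A" "Poly_Mapping.keys m \<subseteq> A"
  shows "mon_degree m = (\<Sum>i\<in>A. Poly_Mapping.lookup m i)"
  unfolding mon_degree_def
  by (rule sum.mono_neutral_left) (use assms in \<open>auto simp: in_keys_iff\<close>)

lemma mon_degree_add: "mon_degree (m1 + m2) = mon_degree m1 + mon_degree m2"
proof -
  let ?A = "Poly_Mapping.keys m1 \<union> Poly_Mapping.keys m2"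
  have "mon_degree (m1 + m2) = (\<Sum>i\<in>?A. Poly_Mapping.lookup (m1 + m2) i)"
    by (rule mon_degree_eq_sum_superset) (auto simp: keys_add_nat)
  then show ?thesis
    by (simp add: lookup_add sum.distrib mon_degree_eq_sum_superset[symmetric])
qed

lemma homogeneous_0 [simp]: "homogeneous d 0"
  by (simp add: homogeneous_def)

lemma homogeneous_const [simp]: "homogeneous 0 (const c)"
  by (simp add: homogeneous_def const_def mon_degree_def)

lemma homogeneous_1 [simp]: "homogeneous 0 1"
  using homogeneous_const[of 1] by simp

lemma homogeneous_var [simp]: "homogeneous 1 (var i)"
  by (simp add: homogeneous_def var_def mon_degree_def)

lemma homogeneous_add: "homogeneous d f \<Longrightarrow> homogeneous d g \<Longrightarrow> homogeneous d (f + g)"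
  unfolding homogeneous_def using keys_add[of f g] by blast

lemma homogeneous_uminus: "homogeneous d f \<Longrightarrow> homogeneous d (- f)"
  unfolding homogeneous_def by simp

lemma homogeneous_diff: "homogeneous d f \<Longrightarrow> homogeneous d g \<Longrightarrow> homogeneous d (f - g)"
  using homogeneous_add[of d f "- g"] homogeneous_uminus[of d g] by simp

lemma homogeneous_mult: "homogeneous a f \<Longrightarrow> homogeneous b g \<Longrightarrow> homogeneous (a + b) (f * g)"
  unfolding homogeneous_def using keys_mult[of f g] by (auto simp: mon_degree_add)

lemma homogeneous_sum: "(\<And>x. x \<in> A \<Longrightarrow> homogeneous d (F x)) \<Longrightarrow> homogeneous d (sum F A)"
  by (induction A rule: infinite_finite_induct) (auto intro: homogeneous_add)

lemma homogeneous_prod: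
  "(\<And>x. x \<in> A \<Longrightarrow> homogeneous (D x) (F x)) \<Longrightarrow> homogeneous (sum D A) (prod F A)"
  by (induction A rule: infinite_finite_induct) (auto intro: homogeneous_mult)

lemma homogeneous_power: "homogeneous d f \<Longrightarrow> homogeneous (k * d) (f ^ k)"
  by (induction k) (auto dest: homogeneous_mult)

lemma homogeneous_subst:
  assumes g: "\<And>i. homogeneous 1 (g i)" and f: "homogeneous d f"
  shows "homogeneous d (subst g f)"
  unfolding subst_conv_subst_monom
proof (rule homogeneous_sum)
  fix m assume m: "m \<in> Poly_Mapping.keys f"
  have "homogeneous (0 + mon_degree m) (const (Poly_Mapping.lookup f m) * subst_monom g m)"
    unfolding subst_monom_def mon_degree_def
    by (intro homogeneous_mult homogeneous_const homogeneous_prod)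
       (use homogeneous_power[OF g] in simp)
  then show "homogeneous d (const (Poly_Mapping.lookup f m) * subst_monom g m)"
    using f m by (simp add: homogeneous_def)
qed

definition hom_component :: "nat \<Rightarrow> mpoly \<Rightarrow> mpoly" where
  "hom_component k f = (\<Sum>m\<in>{m\<in>Poly_Mapping.keys f. mon_degree m = k}.
     Poly_Mapping.single m (Poly_Mapping.lookup f m))"

lemma lookup_hom_component:
  "Poly_Mapping.lookup (hom_component k f) m = (if mon_degree m = k then Poly_Mapping.lookup f m else 0)"
  by (cases "m \<in> Poly_Mapping.keys f")
     (auto simp: hom_component_def lookup_sum lookup_single when_def in_keys_iff)

lemma hom_component_0 [simp]: "hom_component k 0 = 0"
  by (simp add: hom_component_def)

lemma hom_component_add: "hom_component k (f + g) = hom_component k f + hom_component k g"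
  by (rule poly_mapping_eqI) (simp add: lookup_hom_component lookup_add)

lemma hom_component_sum: "hom_component k (sum F A) = (\<Sum>x\<in>A. hom_component k (F x))"
  by (induction A rule: infinite_finite_induct) (auto simp: hom_component_add)

lemma hom_component_of_homogeneous: "homogeneous d f \<Longrightarrow> hom_component k f = (if k = d then f else 0)"
  by (rule poly_mapping_eqI) (auto simp: lookup_hom_component homogeneous_def in_keys_iff)

lemma homogeneous_hom_component: "homogeneous k (hom_component k f)"
  by (auto simp: homogeneous_def in_keys_iff lookup_hom_component split: if_splits)

lemma sum_hom_component: "(\<Sum>k\<in>mon_degree ` Poly_Mapping.keys f. hom_component k f) = f"
proof (rule poly_mapping_eqI)
  fix m
  show "Poly_Mapping.lookup (\<Sum>k\<in>mon_degree ` Poly_Mapping.keys f. hom_component k f) m =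
      Poly_Mapping.lookup f m"
    by (cases "m \<in> Poly_Mapping.keys f")
       (auto simp: lookup_sum lookup_hom_component in_keys_iff intro!: sum.neutral)
qed

lemma hom_component_mult_homogeneous:
  assumes "homogeneous e P"
  shows "hom_component (e + k) (P * q) = P * hom_component k q"
proof -
  let ?J = "mon_degree ` Poly_Mapping.keys q"
  have "P * q = (\<Sum>j\<in>?J. P * hom_component j q)"
    by (subst sum_hom_component[of q, symmetric]) (simp add: sum_distrib_left)
  then have "hom_component (e + k) (P * q) = (\<Sum>j\<in>?J. hom_component (e + k) (P * hom_component j q))"
    by (simp add: hom_component_sum)
  also have "\<dots> = (\<Sum>j\<in>?J. if j = k then P * hom_component j q else 0)"
    by (rule sum.cong)
       (auto simp: hom_component_of_homogeneous[OF homogeneous_mult[OF assms homogeneous_hom_component]])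
  also have "\<dots> = P * hom_component k q"
  proof (cases "k \<in> ?J")
    case False
    then have "hom_component k q = 0"
      by (intro poly_mapping_eqI) (auto simp: lookup_hom_component in_keys_iff)
    then show ?thesis
      using False by (simp add: sum.delta)
  qed (simp add: sum.delta)
  finally show ?thesis .
qed

lemma mon_degree_of_cofactor:
  assumes P: "P \<noteq> 0" "homogeneous e P" and Pq: "homogeneous d (P * q)"
    and m: "m \<in> Poly_Mapping.keys q"
  shows "e + mon_degree m = d"
proof (rule ccontr)
  assume "e + mon_degree m \<noteq> d"
  then have "P * hom_component (mon_degree m) q = 0"
    using hom_component_of_homogeneous[OF Pq] by (simp add: hom_component_mult_homogeneous[OF P(2), symmetric])
  then have "Poly_Mapping.lookup (hom_component (mon_degree m) q) m = 0"
    using P(1) by simp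
  then show False
    using m by (simp add: lookup_hom_component in_keys_iff)
qed

lemma homogeneous_cofactor:
  assumes "P \<noteq> 0" "homogeneous e P" "homogeneous d (P * q)"
  shows "homogeneous (d - e) q" and "q \<noteq> 0 \<Longrightarrow> e \<le> d"
  using mon_degree_of_cofactor[OF assms] unfolding homogeneous_def
  by (fastforce, metis keys_eq_empty equals0I le_add1)

lemma total_degree_homogeneous: "homogeneous d f \<Longrightarrow> f \<noteq> 0 \<Longrightarrow> total_degree f = d"
proof -
  assume "homogeneous d f" "f \<noteq> 0"
  then have "mon_degree ` Poly_Mapping.keys f = {d}"
    unfolding homogeneous_def by (auto simp: keys_eq_empty[symmetric] simp del: keys_eq_empty)
  then show ?thesis
    by (simp add: total_degree_def)
qed

section \<open>Divisibility by the roots t_a - t_b\<close>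

lemma var_eq_iff [simp]: "var i = var j \<longleftrightarrow> i = j"
proof
  assume eq: "var i = var j"
  have "Poly_Mapping.lookup (var i) (Poly_Mapping.single i 1) = 1"
    by (simp add: var_def)
  then have "Poly_Mapping.lookup (var j) (Poly_Mapping.single i 1) = 1"
    by (simp only: eq)
  then have "Poly_Mapping.single j (1::nat) = Poly_Mapping.single i 1"
    by (simp add: var_def lookup_single when_def split: if_splits)
  then have "Poly_Mapping.lookup (Poly_Mapping.single j (1::nat)) i = 1"
    by simp
  then show "i = j"
    by (simp add: lookup_single when_def split: if_splits)
qed simp

definition vanishes_on_hyperplane :: "nat \<Rightarrow> nat \<Rightarrow> mpoly \<Rightarrow> bool" where
  "vanishes_on_hyperplane a b f \<longleftrightarrow> subst (var(a := var b)) f = 0"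

lemma vanishes_on_hyperplane_root_mult: "vanishes_on_hyperplane a b (q * (var a - var b))"
  by (simp add: vanishes_on_hyperplane_def subst_mult subst_diff)

lemma vanishes_on_hyperplane_mult_cancel:
  "\<not> vanishes_on_hyperplane a b g \<Longrightarrow> vanishes_on_hyperplane a b (g * f) \<Longrightarrow> vanishes_on_hyperplane a b f"
  by (simp add: vanishes_on_hyperplane_def subst_mult)

lemma not_vanishes_on_hyperplane_root:
  assumes "c < d" "a < b" "(c, d) \<noteq> (a, b)"
  shows "\<not> vanishes_on_hyperplane a b (var c - var d)"
  using assms by (auto simp: vanishes_on_hyperplane_def subst_diff)

lemma ring_dvd_monom_sub_subst:
  assumes m: "Poly_Mapping.keys m \<subseteq> {1..n}" and b: "b \<in> {1..n}"
  shows "ring_dvd n (var a - var b) (subst_monom var m - subst_monom (var(a := var b)) m)"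
proof (cases "a \<in> Poly_Mapping.keys m")
  case False
  then have "subst_monom (var(a := var b)) m = subst_monom var m"
    unfolding subst_monom_def by (intro prod.cong) auto
  then show ?thesis by simp
next
  case True
  let ?e = "Poly_Mapping.lookup m a"
  let ?R = "\<Prod>i\<in>Poly_Mapping.keys m - {a}. var i ^ Poly_Mapping.lookup m i"
  have "subst_monom g m = g a ^ ?e * (\<Prod>i\<in>Poly_Mapping.keys m - {a}. g i ^ Poly_Mapping.lookup m i)" for g
    unfolding subst_monom_def using True by (simp add: prod.remove)
  then have "subst_monom var m - subst_monom (var(a := var b)) m = (var a ^ ?e - var b ^ ?e) * ?R"
    by (simp add: algebra_simps)
  also have "\<dots> = ((\<Sum>i<?e. var b ^ (?e - Suc i) * var a ^ i) * ?R) * (var a - var b)"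
    by (simp add: power_diff_sumr2 ac_simps)
  finally show ?thesis
    using True m b
    by (auto intro!: ring_dvd_mult_left in_ring_mult in_ring_sum in_ring_prod in_ring_power in_ring_var)
qed

lemma ring_dvd_sub_subst:
  assumes f: "in_ring n f" and b: "b \<in> {1..n}"
  shows "ring_dvd n (var a - var b) (f - subst (var(a := var b)) f)"
proof -
  have "f - subst (var(a := var b)) f = (\<Sum>m\<in>Poly_Mapping.keys f.
      const (Poly_Mapping.lookup f m) * (subst_monom var m - subst_monom (var(a := var b)) m))"
    by (subst (1) poly_mapping_eq_sum_single)
       (simp add: subst_monom_var const_def mult_single subst_conv_subst_monom
          right_diff_distrib sum_subtractf)
  moreover have "ring_dvd n (var a - var b) (subst_monom var m - subst_monom (var(a := var b)) m)"
    if "m \<in> Poly_Mapping.keys f" for m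
    using f b that by (intro ring_dvd_monom_sub_subst) (auto simp: in_ring_def)
  ultimately show ?thesis
    by (auto intro!: ring_dvd_sum ring_dvd_mult)
qed

lemma ring_dvd_root_iff_vanishes:
  assumes "in_ring n f" "b \<in> {1..n}"
  shows "ring_dvd n (var a - var b) f \<longleftrightarrow> vanishes_on_hyperplane a b f"
  using ring_dvd_sub_subst[OF assms, of a] vanishes_on_hyperplane_root_mult[of a b]
  by (auto simp: ring_dvd_def vanishes_on_hyperplane_def)

text \<open>After dividing by one root, the cofactor still vanishes on the other hyperplanes, since
  distinct roots t_a - t_b do not vanish on each other's hyperplanes.\<close>

lemma ring_dvd_prod_roots:
  assumes "finite B" "B \<subseteq> {(a, b). 1 \<le> a \<and> a < b \<and> b \<le> n}" "in_ring n f"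
    "\<And>a b. (a, b) \<in> B \<Longrightarrow> vanishes_on_hyperplane a b f"
  shows "ring_dvd n (\<Prod>(a, b)\<in>B. var a - var b) f"
  using assms
proof (induction B arbitrary: f rule: finite_induct)
  case empty
  then show ?case by (auto simp: ring_dvd_def)
next
  case (insert p B)
  obtain a b where p: "p = (a, b)" and ab: "1 \<le> a" "a < b" "b \<le> n"
    using insert.prems(1) by (cases p) auto
  obtain q where q: "in_ring n q" "f = q * (var a - var b)"
    using insert.prems(2,3) ab p ring_dvd_root_iff_vanishes[of n f b a] by (auto simp: ring_dvd_def)
  have "vanishes_on_hyperplane c d q" if cd: "(c, d) \<in> B" for c d
  proof (rule vanishes_on_hyperplane_mult_cancel)
    show "\<not> vanishes_on_hyperplane c d (var a - var b)"
      using cd insert.hyps(2) insert.prems(1) p ab by (intro not_vanishes_on_hyperplane_root) auto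
    show "vanishes_on_hyperplane c d ((var a - var b) * q)"
      using insert.prems(3)[of c d] cd q(2) by (simp add: mult.commute)
  qed
  then obtain q' where "in_ring n q'" "q = q' * (\<Prod>(a, b)\<in>B. var a - var b)"
    using insert.IH[OF _ q(1)] insert.prems(1) by (auto simp: ring_dvd_def)
  then show ?case
    using q(2) insert.hyps p by (auto simp: ring_dvd_def ac_simps)
qed

section \<open>Inversions and length\<close>

definition inversions :: "nat \<Rightarrow> (nat \<Rightarrow> nat) \<Rightarrow> (nat \<times> nat) set" where
  "inversions n \<pi> = {(i, j). 1 \<le> i \<and> i < j \<and> j \<le> n \<and> \<pi> i > \<pi> j}"

lemma finite_inversions [simp]: "finite (inversions n \<pi>)"
  by (rule finite_subset[of _ "{1..n} \<times> {1..n}"]) (auto simp: inversions_def)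

lemma inversions_subset: "inversions n \<pi> \<subseteq> {(a, b). 1 \<le> a \<and> a < b \<and> b \<le> n}"
  by (auto simp: inversions_def)

lemma root_eq_iff:
  assumes "i < j" "k < l"
  shows "var i - var j = var k - var l \<longleftrightarrow> i = k \<and> j = l"
proof
  assume eq: "var i - var j = var k - var l"
  have "vanishes_on_hyperplane i j (var k - var l)"
    using eq vanishes_on_hyperplane_root_mult[of i j 1] by simp
  then show "i = k \<and> j = l"
    using not_vanishes_on_hyperplane_root[of k l i j] assms by auto
qed simp

lemma inj_on_root: "inj_on (\<lambda>(i, j). var i - var j) (inversions n \<pi>)"
  by (auto simp: inj_on_def inversions_def root_eq_iff)

lemma Inv_eq_image_inversions: "Inv n w = (\<lambda>(i, j). var i - var j) ` inversions n (inv w)"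
  unfolding Inv_def inversions_def by auto

lemma ell_eq_card_inversions: "ell n w = card (inversions n (inv w))"
  unfolding ell_def Inv_eq_image_inversions by (rule card_image[OF inj_on_root])

lemma prod_Inv_eq_prod_inversions:
  "(\<Prod>\<beta>\<in>Inv n w. \<beta>) = (\<Prod>(i, j)\<in>inversions n (inv w). var i - var j)"
  unfolding Inv_eq_image_inversions by (subst prod.reindex[OF inj_on_root]) (simp add: case_prod_unfold)

lemma prod_Inv_nonzero: "(\<Prod>\<beta>\<in>Inv n w. \<beta>) \<noteq> 0"
proof -
  have "var i - var j \<noteq> 0" if "(i, j) \<in> inversions n (inv w)" for i j
    using that by (auto simp: inversions_def)
  then show ?thesis
    by (auto simp: prod_Inv_eq_prod_inversions prod_zero_iff)
qed

lemma homogeneous_prod_Inv: "homogeneous (ell n w) (\<Prod>\<beta>\<in>Inv n w. \<beta>)"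
proof -
  have "homogeneous (\<Sum>\<beta>\<in>Inv n w. 1) (\<Prod>\<beta>\<in>Inv n w. \<beta>)"
    by (rule homogeneous_prod) (auto simp: Inv_def intro!: homogeneous_diff homogeneous_var[unfolded One_nat_def])
  then show ?thesis
    by (simp add: ell_def)
qed

text \<open>transpose_pair a b maps the inversions of \<pi> \<circ> transpose a b injectively to inversions
  of \<pi>, avoiding (a, b) when (a, b) is an inversion of \<pi>; for b = a + 1 only (a, b) itself
  can fail to be mapped.\<close>

definition transpose_pair :: "nat \<Rightarrow> nat \<Rightarrow> nat \<times> nat \<Rightarrow> nat \<times> nat" where
  "transpose_pair a b p = (if transpose a b (fst p) < transpose a b (snd p)
     then (transpose a b (fst p), transpose a b (snd p)) else p)"

lemma inj_on_transpose_pair: "inj_on (transpose_pair a b) {(i, j). i < j}"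
  by (auto simp: inj_on_def transpose_pair_def transpose_eq_iff split: if_splits)

lemma transpose_not_less:
  fixes i j a b :: nat
  assumes "i < j" "\<not> transpose a b i < transpose a b j" "a < b"
  shows "(i = a \<and> a < j \<and> j \<le> b) \<or> (a < i \<and> i < b \<and> j = b)"
proof -
  consider "i = a" | "i = b" | "i \<noteq> a" "i \<noteq> b" by blast
  then show ?thesis
    by cases (use assms in \<open>auto simp: transpose_def split: if_splits\<close>)
qed

lemma transpose_pair_mem_inversions:
  assumes ab: "1 \<le> a" "a < b" "b \<le> n" and "\<pi> a > \<pi> b"
    and p: "p \<in> inversions n (\<pi> \<circ> transpose a b)"
  shows "transpose_pair a b p \<in> inversions n \<pi> - {(a, b)}"
proof -
  obtain i j where pij: "p = (i, j)" and ij: "1 \<le> i" "i < j" "j \<le> n"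
      "\<pi> (transpose a b i) > \<pi> (transpose a b j)"
    using p by (auto simp: inversions_def)
  have "transpose_pair a b (i, j) \<in> inversions n \<pi>"
  proof (cases "transpose a b i < transpose a b j")
    case True
    have "transpose a b i \<in> {1..n}" "transpose a b j \<in> {1..n}"
      using ij ab by (auto simp: transpose_def)
    then show ?thesis
      using True ij by (auto simp: transpose_pair_def inversions_def)
  next
    case False
    then have "\<pi> i > \<pi> j"
      using transpose_not_less[OF ij(2) False ab(2)] ij(4) \<open>\<pi> a > \<pi> b\<close>
      by (cases "j = b") (auto simp: transpose_def)
    then show ?thesis
      using False ij by (simp add: transpose_pair_def inversions_def)
  qed
  moreover have "(i, j) \<noteq> (a, b)"
    using ij(4) \<open>\<pi> a > \<pi> b\<close> by auto
  then have "transpose_pair a b (i, j) \<noteq> transpose_pair a b (a, b)"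
    using ij(2) ab(2) inj_on_eq_iff[OF inj_on_transpose_pair, of "(i, j)" "(a, b)"] by auto
  ultimately show ?thesis
    using pij ab by (simp add: transpose_pair_def)
qed

lemma transpose_pair_mem_inversions_adjacent:
  assumes a: "1 \<le> a" "Suc a \<le> n"
    and p: "p \<in> inversions n (\<pi> \<circ> transpose a (Suc a)) - {(a, Suc a)}"
  shows "transpose_pair a (Suc a) p \<in> inversions n \<pi>"
proof -
  obtain i j where pij: "p = (i, j)" and ij: "1 \<le> i" "i < j" "j \<le> n" "(i, j) \<noteq> (a, Suc a)"
      "\<pi> (transpose a (Suc a) i) > \<pi> (transpose a (Suc a) j)"
    using p by (auto simp: inversions_def)
  have "transpose a (Suc a) i < transpose a (Suc a) j"
  proof (rule ccontr)
    assume "\<not> ?thesis"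
    from transpose_not_less[OF ij(2) this] ij(4) show False by auto
  qed
  then show ?thesis
    using ij pij a by (auto simp: transpose_pair_def inversions_def transpose_def)
qed

lemma card_inversions_comp_transpose_less:
  assumes "1 \<le> a" "a < b" "b \<le> n" "\<pi> a > \<pi> b"
  shows "card (inversions n (\<pi> \<circ> transpose a b)) < card (inversions n \<pi>)"
proof -
  have inj: "inj_on (transpose_pair a b) (inversions n (\<pi> \<circ> transpose a b))"
    by (rule inj_on_subset[OF inj_on_transpose_pair]) (auto simp: inversions_def)
  have "card (inversions n (\<pi> \<circ> transpose a b)) = card (transpose_pair a b ` inversions n (\<pi> \<circ> transpose a b))"
    using card_image[OF inj] by simp
  also have "\<dots> \<le> card (inversions n \<pi> - {(a, b)})"
    by (rule card_mono[OF _ image_subsetI]) (simp, use transpose_pair_mem_inversions[OF assms] in blast)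
  also have "\<dots> < card (inversions n \<pi>)"
    by (rule card_Diff1_less) (simp, use assms in \<open>simp add: inversions_def\<close>)
  finally show ?thesis .
qed

lemma card_inversions_comp_adjacent_transpose_le:
  assumes "1 \<le> a" "Suc a \<le> n"
  shows "card (inversions n (\<pi> \<circ> transpose a (Suc a))) \<le> card (inversions n \<pi>) + 1"
proof -
  let ?A = "inversions n (\<pi> \<circ> transpose a (Suc a)) - {(a, Suc a)}"
  have inj: "inj_on (transpose_pair a (Suc a)) ?A"
    by (rule inj_on_subset[OF inj_on_transpose_pair]) (auto simp: inversions_def)
  have "card (inversions n (\<pi> \<circ> transpose a (Suc a))) \<le> card ?A + 1"
    by (cases "(a, Suc a) \<in> inversions n (\<pi> \<circ> transpose a (Suc a))") (simp_all add: card_Diff1_le)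
  also have "card ?A = card (transpose_pair a (Suc a) ` ?A)"
    using card_image[OF inj] by simp
  also have "\<dots> \<le> card (inversions n \<pi>)"
    by (rule card_mono[OF _ image_subsetI]) (simp, use transpose_pair_mem_inversions_adjacent[OF assms] in blast)
  finally show ?thesis
    by (simp add: comp_def)
qed

section \<open>The symmetric group\<close>

lemma finite_Sn [simp]: "finite (Sn n)"
  unfolding Sn_def by (rule finite_permutations) simp

lemma Sn_inv: "u \<in> Sn n \<Longrightarrow> inv u \<in> Sn n"
  by (simp add: Sn_def permutes_inv)

lemma Sn_comp: "u \<in> Sn n \<Longrightarrow> v \<in> Sn n \<Longrightarrow> u \<circ> v \<in> Sn n"
  by (simp add: Sn_def permutes_compose)

lemma Sn_transpose: "a \<in> {1..n} \<Longrightarrow> b \<in> {1..n} \<Longrightarrow> transpose a b \<in> Sn n"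
  by (simp add: Sn_def permutes_swap_id)

lemma Sn_in_range: "u \<in> Sn n \<Longrightarrow> i \<in> {1..n} \<Longrightarrow> u i \<in> {1..n}"
  unfolding Sn_def by (metis mem_Collect_eq permutes_in_image)

lemma Sn_comp_inv: "u \<in> Sn n \<Longrightarrow> u \<circ> inv u = id"
  by (simp add: Sn_def permutes_inv_o)

lemma Sn_inv_o_distrib: "u \<in> Sn n \<Longrightarrow> v \<in> Sn n \<Longrightarrow> inv (u \<circ> v) = inv v \<circ> inv u"
  by (simp add: Sn_def o_inv_distrib permutes_bij)

lemma inv_transpose_comp: "w \<in> Sn n \<Longrightarrow> inv (transpose a b \<circ> w) = inv w \<circ> transpose a b"
  by (simp add: Sn_def o_inv_distrib permutes_bij)

lemma transpose_comp_transpose_comp [simp]: "transpose a b \<circ> (transpose a b \<circ> u) = u"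
  by (simp add: comp_assoc[symmetric])

lemma ell_transpose_comp_less:
  assumes w: "w \<in> Sn n" and ab: "(a, b) \<in> inversions n (inv w)"
  shows "ell n (transpose a b \<circ> w) < ell n w"
  using card_inversions_comp_transpose_less[of a b n "inv w"] ab
  by (simp add: ell_eq_card_inversions inversions_def inv_transpose_comp[OF w])

lemma ell_adjacent_transpose_comp_le:
  assumes w: "w \<in> Sn n" and a: "1 \<le> a" "Suc a \<le> n"
  shows "ell n (transpose a (Suc a) \<circ> w) \<le> ell n w + 1"
  using card_inversions_comp_adjacent_transpose_le[OF a, of "inv w"]
  by (simp add: ell_eq_card_inversions inv_transpose_comp[OF w])

lemma permutes_eq_id_if_adjacent_increasing:
  assumes \<pi>: "\<pi> permutes {1..n}" and incr: "\<And>i. 1 \<le> i \<Longrightarrow> Suc i \<le> n \<Longrightarrow> \<pi> i < \<pi> (Suc i)"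
  shows "\<pi> = id"
proof (rule permutes_natset_ge[OF \<pi>])
  have "1 \<le> i \<longrightarrow> i \<le> n \<longrightarrow> i \<le> \<pi> i" for i
  proof (induction i)
    case (Suc i)
    then show ?case
      using incr[of i] permutes_in_image[OF \<pi>, of 1] by (cases i) auto
  qed simp
  then show "\<forall>i\<in>{1..n}. i \<le> \<pi> i" by auto
qed

lemma Sn_adjacent_transposition_induct [consumes 1, case_names id step]:
  assumes "p \<in> Sn n" and id: "P id"
    and step: "\<And>p i. p \<in> Sn n \<Longrightarrow> P p \<Longrightarrow> 1 \<le> i \<Longrightarrow> Suc i \<le> n \<Longrightarrow> P (transpose i (Suc i) \<circ> p)"
  shows "P p"
  using assms(1)
proof (induction "ell n p" arbitrary: p rule: less_induct)
  case less
  show ?case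
  proof (cases "\<exists>i. (i, Suc i) \<in> inversions n (inv p)")
    case True
    then obtain i where i: "(i, Suc i) \<in> inversions n (inv p)" by blast
    then have "1 \<le> i" "Suc i \<le> n" by (auto simp: inversions_def)
    then have "transpose i (Suc i) \<circ> p \<in> Sn n"
      using Sn_comp[OF Sn_transpose less.prems] by simp
    with less.hyps[OF ell_transpose_comp_less[OF less.prems i]]
    have "P (transpose i (Suc i) \<circ> (transpose i (Suc i) \<circ> p))"
      using step \<open>1 \<le> i\<close> \<open>Suc i \<le> n\<close> by blast
    then show ?thesis by simp
  next
    case False
    have "inv p permutes {1..n}" using Sn_inv[OF less.prems] by (simp add: Sn_def)
    moreover have "inv p i < inv p (Suc i)" if "1 \<le> i" "Suc i \<le> n" for i
    proof -
      have "inv p i \<noteq> inv p (Suc i)"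
        using \<open>inv p permutes {1..n}\<close> permutes_inj by (metis injD n_not_Suc_n)
      then show ?thesis using False that by (auto simp: inversions_def)
    qed
    ultimately have "inv p = id" by (rule permutes_eq_id_if_adjacent_increasing)
    then show ?thesis
      using id Sn_comp_inv[OF less.prems] by (metis comp_id)
  qed
qed

section \<open>The Bruhat order\<close>

lemma bruhat_step_imp: "bruhat_step n v w \<Longrightarrow> w \<in> Sn n \<and> ell n v < ell n w"
  unfolding bruhat_step_def by (auto intro!: Sn_comp Sn_transpose)

lemma bruhat_le_imp: "bruhat_le n v w \<Longrightarrow> v \<in> Sn n \<and> w \<in> Sn n \<and> (v \<noteq> w \<longrightarrow> ell n v < ell n w)"
  unfolding bruhat_le_def
proof (elim conjE)
  assume "(bruhat_step n)\<^sup>*\<^sup>* v w" "v \<in> Sn n"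
  then show ?thesis
    by (induction rule: rtranclp_induct) (auto dest: bruhat_step_imp)
qed

lemma bruhat_le_ell: "bruhat_le n v w \<Longrightarrow> ell n v \<le> ell n w"
  using bruhat_le_imp[of n v w] by fastforce

lemma bruhat_le_eq_if_ell_le: "bruhat_le n v w \<Longrightarrow> ell n w \<le> ell n v \<Longrightarrow> v = w"
  using bruhat_le_imp[of n v w] by fastforce

lemma bruhat_le_refl: "v \<in> Sn n \<Longrightarrow> bruhat_le n v v"
  by (simp add: bruhat_le_def)

lemma bruhat_le_trans: "bruhat_le n u v \<Longrightarrow> bruhat_le n v w \<Longrightarrow> bruhat_le n u w"
  unfolding bruhat_le_def by auto

lemma bruhat_le_antisym: "bruhat_le n v w \<Longrightarrow> bruhat_le n w v \<Longrightarrow> v = w"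
  using bruhat_le_eq_if_ell_le bruhat_le_ell by blast

lemma bruhat_le_transpose_comp:
  assumes "v \<in> Sn n" "1 \<le> j" "j < k" "k \<le> n" "ell n v < ell n (transpose j k \<circ> v)"
  shows "bruhat_le n v (transpose j k \<circ> v)"
  using assms unfolding bruhat_le_def bruhat_step_def by blast

lemma bruhat_le_transpose_comp_inversion:
  assumes u: "u \<in> Sn n" and ab: "(a, b) \<in> inversions n (inv u)"
  shows "bruhat_le n (transpose a b \<circ> u) u"
  using bruhat_le_transpose_comp[of "transpose a b \<circ> u" n a b] ell_transpose_comp_less[OF u ab]
    Sn_comp[OF Sn_transpose u, of a b] ab
  by (auto simp: inversions_def)

section \<open>The Weyl group action and GKM classes\<close>

lemma poly_act_diff: "poly_act u (f - g) = poly_act u f - poly_act u g"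
  by (simp add: poly_act_def subst_diff)

lemma poly_act_mult: "poly_act u (f * g) = poly_act u f * poly_act u g"
  by (simp add: poly_act_def subst_mult)

lemma poly_act_sum: "poly_act u (sum F A) = (\<Sum>x\<in>A. poly_act u (F x))"
  by (simp add: poly_act_def subst_sum)

lemma poly_act_0 [simp]: "poly_act u 0 = 0"
  by (simp add: poly_act_def)

lemma poly_act_1 [simp]: "poly_act u 1 = 1"
  by (simp add: poly_act_def)

lemma poly_act_var [simp]: "poly_act u (var i) = var (u i)"
  by (simp add: poly_act_def)

lemma poly_act_poly_act: "poly_act u (poly_act v f) = poly_act (u \<circ> v) f"
  by (simp add: poly_act_def subst_subst)

lemma poly_act_id: "poly_act id f = f"
  by (simp add: poly_act_def subst_var_id[unfolded id_def] id_def)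

lemma in_ring_poly_act: "u \<in> Sn n \<Longrightarrow> in_ring n f \<Longrightarrow> in_ring n (poly_act u f)"
  unfolding poly_act_def by (rule in_ring_subst) (auto intro: in_ring_var dest: Sn_in_range)

lemma homogeneous_poly_act: "homogeneous d f \<Longrightarrow> homogeneous d (poly_act u f)"
  unfolding poly_act_def by (rule homogeneous_subst[OF homogeneous_var])

lemma ring_dvd_poly_act: "u \<in> Sn n \<Longrightarrow> ring_dvd n g f \<Longrightarrow> ring_dvd n (poly_act u g) (poly_act u f)"
  unfolding ring_dvd_def by (auto simp: poly_act_mult intro: in_ring_poly_act)

lemma ring_dvd_sub_poly_act_transpose:
  assumes "in_ring n f" "1 \<le> a" "a < b" "b \<le> n"
  shows "ring_dvd n (var a - var b) (f - poly_act (transpose a b) f)"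
proof -
  have "(\<lambda>j. (var(a := var b)) (transpose a b j)) = var(a := var b)"
    by (auto simp: fun_eq_iff transpose_def)
  then have "vanishes_on_hyperplane a b (f - poly_act (transpose a b) f)"
    by (simp add: vanishes_on_hyperplane_def poly_act_def subst_diff subst_subst)
  then show ?thesis
    using assms by (simp add: ring_dvd_root_iff_vanishes in_ring_diff in_ring_poly_act Sn_transpose)
qed

lemma weyl_act_id: "weyl_act id p u = p u"
  by (simp add: weyl_act_def poly_act_id)

lemma weyl_act_comp:
  assumes "u \<in> Sn n" "v \<in> Sn n"
  shows "weyl_act u (weyl_act v p) x = weyl_act (u \<circ> v) p x"
  using assms by (simp add: weyl_act_def poly_act_poly_act Sn_inv_o_distrib comp_assoc)

lemma gkm_iff_ring_dvd:
  "gkm n p \<longleftrightarrow> (\<forall>u\<in>Sn n. in_ring n (p u)) \<and>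
     (\<forall>u\<in>Sn n. \<forall>j k. 1 \<le> j \<longrightarrow> j < k \<longrightarrow> k \<le> n \<longrightarrow>
        ring_dvd n (var j - var k) (p u - p (transpose j k \<circ> u)))"
  unfolding gkm_def ring_dvd_def by blast

lemma gkmI:
  assumes "\<And>u. u \<in> Sn n \<Longrightarrow> in_ring n (p u)"
    and "\<And>u j k. u \<in> Sn n \<Longrightarrow> 1 \<le> j \<Longrightarrow> j < k \<Longrightarrow> k \<le> n \<Longrightarrow>
      ring_dvd n (var j - var k) (p u - p (transpose j k \<circ> u))"
  shows "gkm n p"
  using assms by (simp add: gkm_iff_ring_dvd)

lemma gkm_in_ring: "gkm n p \<Longrightarrow> u \<in> Sn n \<Longrightarrow> in_ring n (p u)"
  by (simp add: gkm_iff_ring_dvd)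

lemma gkm_ring_dvd:
  "gkm n p \<Longrightarrow> u \<in> Sn n \<Longrightarrow> 1 \<le> j \<Longrightarrow> j < k \<Longrightarrow> k \<le> n \<Longrightarrow>
    ring_dvd n (var j - var k) (p u - p (transpose j k \<circ> u))"
  by (simp add: gkm_iff_ring_dvd)

lemma ring_dvd_uminus_left_iff: "ring_dvd n (- g) f \<longleftrightarrow> ring_dvd n g f"
proof
  assume "ring_dvd n (- g) f"
  then obtain q where "in_ring n q" "f = q * - g"
    by (auto simp: ring_dvd_def)
  then show "ring_dvd n g f"
    unfolding ring_dvd_def by (intro exI[of _ "- q"]) (simp add: in_ring_uminus)
next
  assume "ring_dvd n g f"
  then obtain q where "in_ring n q" "f = q * g"
    by (auto simp: ring_dvd_def)
  then show "ring_dvd n (- g) f"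
    unfolding ring_dvd_def by (intro exI[of _ "- q"]) (simp add: in_ring_uminus)
qed

lemma gkm_ring_dvd_sym:
  assumes p: "gkm n p" and u: "u \<in> Sn n" and jk: "j \<in> {1..n}" "k \<in> {1..n}" "j \<noteq> k"
  shows "ring_dvd n (var j - var k) (p u - p (transpose j k \<circ> u))"
proof (cases "j < k")
  case False
  then have "ring_dvd n (var k - var j) (p u - p (transpose j k \<circ> u))"
    using gkm_ring_dvd[OF p u, of k j] jk by (simp add: transpose_commute)
  then show ?thesis
    using ring_dvd_uminus_left_iff[of n "var k - var j"] by simp
qed (use gkm_ring_dvd[OF p u] jk in simp)

lemma gkm_weyl_act:
  assumes s: "s \<in> Sn n" and p: "gkm n p"
  shows "gkm n (weyl_act s p)"
proof (rule gkmI)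
  fix u assume u: "u \<in> Sn n"
  then have x: "inv s \<circ> u \<in> Sn n"
    using s by (simp add: Sn_comp Sn_inv)
  then show "in_ring n (weyl_act s p u)"
    unfolding weyl_act_def by (rule in_ring_poly_act[OF s gkm_in_ring[OF p]])
  fix j k assume jk: "1 \<le> j" "j < k" "k \<le> n"
  have inj: "inj (inv s)"
    using Sn_inv[OF s] by (simp add: Sn_def permutes_inj)
  have "inv s \<circ> (transpose j k \<circ> u) = transpose (inv s j) (inv s k) \<circ> (inv s \<circ> u)"
    using inj by (auto simp: fun_eq_iff transpose_def dest: injD)
  moreover have "s (inv s j) = j" "s (inv s k) = k"
    using s by (simp_all add: Sn_def permutes_inverses)
  moreover have "ring_dvd n (var (inv s j) - var (inv s k))
      (p (inv s \<circ> u) - p (transpose (inv s j) (inv s k) \<circ> (inv s \<circ> u)))"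
    using jk Sn_in_range[OF Sn_inv[OF s]] injD[OF inj, of j k]
    by (intro gkm_ring_dvd_sym[OF p x]) auto
  ultimately show "ring_dvd n (var j - var k) (weyl_act s p u - weyl_act s p (transpose j k \<circ> u))"
    using ring_dvd_poly_act[OF s] by (fastforce simp: weyl_act_def poly_act_diff)
qed

lemma gkm_diff:
  assumes "gkm n p" "gkm n p'"
  shows "gkm n (\<lambda>u. p u - p' u)"
proof (rule gkmI)
  fix u j k assume "u \<in> Sn n" "1 \<le> j" "j < k" "k \<le> n"
  then have "ring_dvd n (var j - var k)
      ((p u - p (transpose j k \<circ> u)) - (p' u - p' (transpose j k \<circ> u)))"
    using assms by (intro ring_dvd_diff gkm_ring_dvd)
  then show "ring_dvd n (var j - var k) (p u - p' u - (p (transpose j k \<circ> u) - p' (transpose j k \<circ> u)))"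
    by (simp add: algebra_simps)
qed (use assms in \<open>simp add: gkm_in_ring in_ring_diff\<close>)

lemma gkm_mult:
  assumes "gkm n p" "in_ring n c"
  shows "gkm n (\<lambda>u. c * p u)"
proof (rule gkmI)
  fix u j k assume "u \<in> Sn n" "1 \<le> j" "j < k" "k \<le> n"
  then show "ring_dvd n (var j - var k) (c * p u - c * p (transpose j k \<circ> u))"
    using assms ring_dvd_mult[OF assms(2) gkm_ring_dvd] by (simp add: right_diff_distrib)
qed (use assms in \<open>simp add: gkm_in_ring in_ring_mult\<close>)

lemma ring_dvd_sub_weyl_act_transpose:
  assumes p: "gkm n p" and u: "u \<in> Sn n" and ab: "1 \<le> a" "a < b" "b \<le> n"
  shows "ring_dvd n (var a - var b) (p u - weyl_act (transpose a b) p u)"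
proof -
  let ?t = "transpose a b"
  have tu: "?t \<circ> u \<in> Sn n"
    using ab by (intro Sn_comp[OF Sn_transpose u]) auto
  have "p u - weyl_act ?t p u = (p u - p (?t \<circ> u)) + (p (?t \<circ> u) - poly_act ?t (p (?t \<circ> u)))"
    by (simp add: weyl_act_def)
  also have "ring_dvd n (var a - var b) \<dots>"
    using gkm_ring_dvd[OF p u ab] ring_dvd_sub_poly_act_transpose[OF gkm_in_ring[OF p tu] ab]
    by (rule ring_dvd_add)
  finally show ?thesis .
qed

text \<open>At a pair (j, k) other than (a, b) the factor t_a - t_b cancels modulo t_j - t_k; at
  (a, b) itself the difference of the quotient is q - t q, where t = transpose a b and q is the
  cofactor of the GKM difference of p at (a, b).\<close>

lemma gkm_divided_difference:
  assumes p: "gkm n p" and ab: "1 \<le> a" "a < b" "b \<le> n"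
    and h: "\<And>u. u \<in> Sn n \<Longrightarrow> in_ring n (h u)"
    and h_eq: "\<And>u. u \<in> Sn n \<Longrightarrow> p u - weyl_act (transpose a b) p u = (var a - var b) * h u"
  shows "gkm n h"
proof (rule gkmI[OF h])
  fix u j k assume u: "u \<in> Sn n" and jk: "1 \<le> j" "j < k" "k \<le> n"
  let ?t = "transpose a b" and ?\<alpha> = "var a - var b" and ?u' = "transpose j k \<circ> u"
  have u': "?u' \<in> Sn n"
    using jk by (intro Sn_comp[OF Sn_transpose u]) auto
  have diff_in_ring: "in_ring n (h u - h ?u')"
    using h[OF u] h[OF u'] by (rule in_ring_diff)
  show "ring_dvd n (var j - var k) (h u - h ?u')"
  proof (cases "(j, k) = (a, b)")
    case True
    obtain q where q: "in_ring n q" "p u - p (?t \<circ> u) = q * ?\<alpha>"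
      using gkm_ring_dvd[OF p u ab] by (auto simp: ring_dvd_def)
    have "?\<alpha> * (h u - h ?u') = (p u - weyl_act ?t p u) - (p ?u' - weyl_act ?t p ?u')"
      using h_eq[OF u] h_eq[OF u'] by (simp add: right_diff_distrib)
    also have "\<dots> = (p u - p (?t \<circ> u)) + poly_act ?t (p u - p (?t \<circ> u))"
      using True by (simp add: weyl_act_def poly_act_diff)
    also have "\<dots> = ?\<alpha> * (q - poly_act ?t q)"
      by (simp add: q(2) poly_act_mult poly_act_diff algebra_simps)
    finally have "h u - h ?u' = q - poly_act ?t q"
      using ab by simp
    then show ?thesis
      using True ring_dvd_sub_poly_act_transpose[OF q(1) ab] by simp
  next
    case False
    have "?t \<in> Sn n"
      using ab by (intro Sn_transpose) auto
    then obtain q where "(p u - weyl_act ?t p u) - (p ?u' - weyl_act ?t p ?u') = q * (var j - var k)"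
      using gkm_ring_dvd[OF gkm_diff[OF p gkm_weyl_act[OF _ p]] u jk] by (auto simp: ring_dvd_def)
    then have "?\<alpha> * (h u - h ?u') = q * (var j - var k)"
      using h_eq[OF u] h_eq[OF u'] by (simp add: right_diff_distrib)
    then have "vanishes_on_hyperplane j k (?\<alpha> * (h u - h ?u'))"
      by (simp add: vanishes_on_hyperplane_root_mult)
    then have "vanishes_on_hyperplane j k (h u - h ?u')"
      using not_vanishes_on_hyperplane_root[of a b j k] False ab jk
      by (blast intro: vanishes_on_hyperplane_mult_cancel)
    then show ?thesis
      using ring_dvd_root_iff_vanishes[OF diff_in_ring, of k j] jk by simp
  qed
qed

lemma homogeneous_divided_difference:
  assumes p_hom: "\<And>u. u \<in> Sn n \<Longrightarrow> homogeneous d (p u)" and ab: "1 \<le> a" "a < b" "b \<le> n"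
    and u: "u \<in> Sn n" and h_eq: "p u - weyl_act (transpose a b) p u = (var a - var b) * h"
  shows "homogeneous (d - 1) h" and "h \<noteq> 0 \<Longrightarrow> 1 \<le> d"
proof -
  have \<alpha>: "var a - var b \<noteq> 0" "homogeneous 1 (var a - var b)"
    using ab by (simp, intro homogeneous_diff homogeneous_var)
  have "transpose a b \<circ> u \<in> Sn n"
    using ab by (intro Sn_comp[OF Sn_transpose u]) auto
  then have "homogeneous d ((var a - var b) * h)"
    unfolding h_eq[symmetric] weyl_act_def
    by (simp add: homogeneous_diff homogeneous_poly_act p_hom u)
  from homogeneous_cofactor[OF \<alpha> this]
  show "homogeneous (d - 1) h" and "h \<noteq> 0 \<Longrightarrow> 1 \<le> d" .
qed

section \<open>Expansion in Schubert classes\<close>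

definition support_upset :: "nat \<Rightarrow> ((nat \<Rightarrow> nat) \<Rightarrow> mpoly) \<Rightarrow> (nat \<Rightarrow> nat) set" where
  "support_upset n f = {v. \<exists>x. f x \<noteq> 0 \<and> bruhat_le n x v}"

lemma support_upset_subset_Sn: "support_upset n f \<subseteq> Sn n"
  by (auto simp: support_upset_def dest: bruhat_le_imp)

lemma finite_support_upset: "finite (support_upset n f)"
  using finite_subset[OF support_upset_subset_Sn] by simp

text \<open>At a point u of minimal length in the support of a GKM class, all the neighbours
  transpose a b \<circ> u along inversions (a, b) are shorter, so f vanishes there and f u is divisible by
  every root of Inv(u).\<close>

lemma gkm_ring_dvd_prod_Inv_at_minimal:
  assumes f: "gkm n f" and u: "u \<in> Sn n"
    and minimal: "\<And>y. y \<in> Sn n \<Longrightarrow> f y \<noteq> 0 \<Longrightarrow> ell n u \<le> ell n y"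
  shows "ring_dvd n (\<Prod>\<beta>\<in>Inv n u. \<beta>) (f u)"
proof -
  have "vanishes_on_hyperplane a b (f u)" if ab: "(a, b) \<in> inversions n (inv u)" for a b
  proof -
    have "f (transpose a b \<circ> u) = 0"
      using minimal[of "transpose a b \<circ> u"] ell_transpose_comp_less[OF u ab]
        bruhat_le_imp[OF bruhat_le_transpose_comp_inversion[OF u ab]] by fastforce
    then show ?thesis
      using gkm_ring_dvd[OF f u, of a b] ab
      by (auto simp: inversions_def ring_dvd_def vanishes_on_hyperplane_root_mult)
  qed
  then show ?thesis
    unfolding prod_Inv_eq_prod_inversions
    by (intro ring_dvd_prod_roots finite_inversions inversions_subset gkm_in_ring[OF f u]) auto
qed

lemma weyl_act_comp_expansion:
  assumes r: "r \<in> Sn n" and p: "p \<in> Sn n"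
    and c: "\<And>u. u \<in> Sn n \<Longrightarrow> weyl_act p (\<sigma> w) u = (\<Sum>v\<in>Sn n. c v * \<sigma> v u)"
    and E: "\<And>v u. v \<in> Sn n \<Longrightarrow> u \<in> Sn n \<Longrightarrow> weyl_act r (\<sigma> v) u = (\<Sum>y\<in>Sn n. E v y * \<sigma> y u)"
    and u: "u \<in> Sn n"
  shows "weyl_act (r \<circ> p) (\<sigma> w) u = (\<Sum>y\<in>Sn n. (\<Sum>v\<in>Sn n. poly_act r (c v) * E v y) * \<sigma> y u)"
proof -
  have "weyl_act (r \<circ> p) (\<sigma> w) u = weyl_act r (weyl_act p (\<sigma> w)) u"
    by (rule weyl_act_comp[OF r p, symmetric])
  also have "\<dots> = poly_act r (weyl_act p (\<sigma> w) (inv r \<circ> u))"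
    unfolding weyl_act_def[of r] ..
  also have "\<dots> = (\<Sum>v\<in>Sn n. poly_act r (c v) * weyl_act r (\<sigma> v) u)"
    using c[OF Sn_comp[OF Sn_inv[OF r] u]] by (simp add: poly_act_sum poly_act_mult weyl_act_def[of r])
  also have "\<dots> = (\<Sum>v\<in>Sn n. \<Sum>y\<in>Sn n. poly_act r (c v) * (E v y * \<sigma> y u))"
    using u by (simp add: E sum_distrib_left)
  also have "\<dots> = (\<Sum>y\<in>Sn n. (\<Sum>v\<in>Sn n. poly_act r (c v) * E v y) * \<sigma> y u)"
    by (subst sum.swap) (simp add: sum_distrib_right mult.assoc)
  finally show ?thesis .
qed

locale schubert_classes =
  fixes n :: nat and \<sigma> :: "(nat \<Rightarrow> nat) \<Rightarrow> (nat \<Rightarrow> nat) \<Rightarrow> mpoly"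
  assumes schubert: "\<forall>v\<in>Sn n. is_schubert_class n v (\<sigma> v)"
begin

lemma gkm_schubert: "v \<in> Sn n \<Longrightarrow> gkm n (\<sigma> v)"
  using schubert by (simp add: is_schubert_class_def)

lemma bruhat_le_if_schubert_nonzero: "v \<in> Sn n \<Longrightarrow> u \<in> Sn n \<Longrightarrow> \<sigma> v u \<noteq> 0 \<Longrightarrow> bruhat_le n v u"
  using schubert by (auto simp: is_schubert_class_def)

lemma homogeneous_schubert: "v \<in> Sn n \<Longrightarrow> u \<in> Sn n \<Longrightarrow> homogeneous (ell n v) (\<sigma> v u)"
  using schubert by (cases "\<sigma> v u = 0") (auto simp: is_schubert_class_def)

lemma schubert_diagonal: "v \<in> Sn n \<Longrightarrow> \<sigma> v v = (\<Prod>\<beta>\<in>Inv n v. \<beta>)"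
  using schubert by (simp add: is_schubert_class_def)

text \<open>Subtracting a multiple of [\<Omega>_u] adds only points above u to the support, since [\<Omega>_u]
  is supported above u; and at u itself the difference vanishes.\<close>

lemma support_upset_sub_schubert:
  assumes u: "u \<in> Sn n" "f u \<noteq> 0" "f u = c * \<sigma> u u"
    and minimal: "\<And>y. y \<in> Sn n \<Longrightarrow> f y \<noteq> 0 \<Longrightarrow> ell n u \<le> ell n y"
  shows "support_upset n (\<lambda>x. f x - c * \<sigma> u x) \<subseteq> support_upset n f - {u}"
proof
  fix v assume "v \<in> support_upset n (\<lambda>x. f x - c * \<sigma> u x)"
  then obtain x where x: "f x - c * \<sigma> u x \<noteq> 0" "bruhat_le n x v"
    by (auto simp: support_upset_def)
  have x_Sn: "x \<in> Sn n"
    using bruhat_le_imp[OF x(2)] by simp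
  then have x_cases: "f x \<noteq> 0 \<or> bruhat_le n u x"
    using x(1) bruhat_le_if_schubert_nonzero[OF u(1)] by fastforce
  moreover have "u \<in> support_upset n f"
    unfolding support_upset_def using u(2) bruhat_le_refl[OF u(1)] by blast
  ultimately have "v \<in> support_upset n f"
    using x(2) by (auto simp: support_upset_def intro: bruhat_le_trans)
  moreover have "v \<noteq> u"
  proof
    assume "v = u"
    with x_cases have "x = u"
      using x(2) minimal[OF x_Sn] bruhat_le_eq_if_ell_le bruhat_le_antisym by blast
    then show False
      using x(1) u(3) by simp
  qed
  ultimately show "v \<in> support_upset n f - {u}" by simp
qed

lemma subtract_lowest_schubert_term:
  assumes f: "gkm n f" and f_hom: "\<And>x. x \<in> Sn n \<Longrightarrow> homogeneous d (f x)"
    and u: "u \<in> Sn n" "f u \<noteq> 0"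
    and minimal: "\<And>y. y \<in> Sn n \<Longrightarrow> f y \<noteq> 0 \<Longrightarrow> ell n u \<le> ell n y"
  obtains c where "in_ring n c" "ell n u \<le> d" "homogeneous (d - ell n u) c"
    and "gkm n (\<lambda>x. f x - c * \<sigma> u x)"
    and "\<And>x. x \<in> Sn n \<Longrightarrow> homogeneous d (f x - c * \<sigma> u x)"
    and "support_upset n (\<lambda>x. f x - c * \<sigma> u x) \<subseteq> support_upset n f - {u}"
proof -
  obtain c where c: "in_ring n c" "f u = c * (\<Prod>\<beta>\<in>Inv n u. \<beta>)"
    using gkm_ring_dvd_prod_Inv_at_minimal[OF f u(1) minimal] by (auto simp: ring_dvd_def)
  have prod_c_hom: "homogeneous d ((\<Prod>\<beta>\<in>Inv n u. \<beta>) * c)"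
    using f_hom[OF u(1)] c(2) by (simp add: mult.commute)
  have c_hom: "homogeneous (d - ell n u) c" and ell_u: "ell n u \<le> d"
    using homogeneous_cofactor[OF prod_Inv_nonzero homogeneous_prod_Inv prod_c_hom] c(2) u(2) by auto
  have "homogeneous d (f x - c * \<sigma> u x)" if "x \<in> Sn n" for x
    using homogeneous_mult[OF c_hom homogeneous_schubert[OF u(1) that]] ell_u
    by (simp add: homogeneous_diff f_hom[OF that])
  moreover have "support_upset n (\<lambda>x. f x - c * \<sigma> u x) \<subseteq> support_upset n f - {u}"
    using c(2) schubert_diagonal[OF u(1)] by (intro support_upset_sub_schubert u minimal) simp
  ultimately show ?thesis
    using that c(1) ell_u c_hom gkm_diff[OF f gkm_mult[OF gkm_schubert[OF u(1)] c(1)]] by blast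
qed

theorem gkm_schubert_expansion:
  assumes "gkm n f" "\<And>u. u \<in> Sn n \<Longrightarrow> homogeneous d (f u)"
  shows "\<exists>c. (\<forall>v\<in>Sn n. in_ring n (c v)) \<and>
    (\<forall>v\<in>Sn n. c v \<noteq> 0 \<longrightarrow> v \<in> support_upset n f \<and> ell n v \<le> d \<and> homogeneous (d - ell n v) (c v)) \<and>
    (\<forall>u\<in>Sn n. f u = (\<Sum>v\<in>Sn n. c v * \<sigma> v u))"
  using assms
proof (induction "card (support_upset n f)" arbitrary: f rule: less_induct)
  case less
  show ?case
  proof (cases "\<exists>u\<in>Sn n. f u \<noteq> 0")
    case False
    then show ?thesis by (intro exI[of _ "\<lambda>_. 0"]) simp
  next
    case True
    then obtain u where u: "u \<in> Sn n" "f u \<noteq> 0"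
      and minimal: "\<And>y. y \<in> Sn n \<Longrightarrow> f y \<noteq> 0 \<Longrightarrow> ell n u \<le> ell n y"
      using ex_has_least_nat[of "\<lambda>x. x \<in> Sn n \<and> f x \<noteq> 0" _ "ell n"] by blast
    obtain c0 where c0: "in_ring n c0" "ell n u \<le> d" "homogeneous (d - ell n u) c0"
      and f': "gkm n (\<lambda>x. f x - c0 * \<sigma> u x)" "\<And>x. x \<in> Sn n \<Longrightarrow> homogeneous d (f x - c0 * \<sigma> u x)"
      and upset: "support_upset n (\<lambda>x. f x - c0 * \<sigma> u x) \<subseteq> support_upset n f - {u}"
      using subtract_lowest_schubert_term[OF less.prems u minimal] by blast
    have "u \<in> support_upset n f"
      using u bruhat_le_refl by (auto simp: support_upset_def)
    then have "card (support_upset n (\<lambda>x. f x - c0 * \<sigma> u x)) < card (support_upset n f)"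
      using upset by (intro psubset_card_mono finite_support_upset) blast
    from less.hyps[OF this f'] obtain c' where
      c'_ring: "\<forall>v\<in>Sn n. in_ring n (c' v)" and
      c'_supp: "\<forall>v\<in>Sn n. c' v \<noteq> 0 \<longrightarrow> v \<in> support_upset n (\<lambda>x. f x - c0 * \<sigma> u x) \<and>
        ell n v \<le> d \<and> homogeneous (d - ell n v) (c' v)" and
      c'_sum: "\<forall>x\<in>Sn n. f x - c0 * \<sigma> u x = (\<Sum>v\<in>Sn n. c' v * \<sigma> v x)"
      by blast
    have "c' u = 0"
      using c'_supp upset u(1) by blast
    show ?thesis
    proof (intro exI[of _ "c'(u := c0)"] conjI ballI impI)
      fix x assume "x \<in> Sn n"
      have "(\<Sum>v\<in>Sn n. (c'(u := c0)) v * \<sigma> v x) =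
          (\<Sum>v\<in>Sn n. c' v * \<sigma> v x + (if v = u then c0 * \<sigma> v x else 0))"
        using \<open>c' u = 0\<close> by (intro sum.cong) auto
      then show "f x = (\<Sum>v\<in>Sn n. (c'(u := c0)) v * \<sigma> v x)"
        using c'_sum \<open>x \<in> Sn n\<close> u(1) by (simp add: sum.distrib diff_eq_eq)
    qed (use c'_ring c'_supp c0 upset \<open>u \<in> support_upset n f\<close> in \<open>auto split: if_splits\<close>)
  qed
qed

text \<open>The divided difference h of [\<Omega>_w] along s_i has degree ell w - 1 and is supported on
  points x with w \<le> x or w \<le> s_i x. Since ell (s_i x) \<le> ell x + 1, a length count leaves only
  [\<Omega>_v] with v = s_i w < w in its expansion, with a constant coefficient.\<close>

lemma support_upset_divided_difference:
  assumes w: "w \<in> Sn n" and i: "1 \<le> i" "Suc i \<le> n"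
    and h_eq: "\<And>u. u \<in> Sn n \<Longrightarrow>
      \<sigma> w u - weyl_act (transpose i (Suc i)) (\<sigma> w) u = (var i - var (Suc i)) * h u"
    and v: "v \<in> support_upset n h" "ell n v < ell n w"
  shows "v = transpose i (Suc i) \<circ> w \<and> ell n v + 1 = ell n w"
proof -
  let ?r = "transpose i (Suc i)"
  obtain x where x: "h x \<noteq> 0" "bruhat_le n x v"
    using v(1) by (auto simp: support_upset_def)
  have x_Sn: "x \<in> Sn n" and rx_Sn: "?r \<circ> x \<in> Sn n"
    using bruhat_le_imp[OF x(2)] i by (auto intro!: Sn_comp Sn_transpose)
  have "\<sigma> w x \<noteq> 0 \<or> \<sigma> w (?r \<circ> x) \<noteq> 0"
    using h_eq[OF x_Sn] x(1) by (auto simp: weyl_act_def)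
  moreover have "\<sigma> w x = 0"
  proof (rule ccontr)
    assume "\<sigma> w x \<noteq> 0"
    then have "ell n w \<le> ell n x"
      using bruhat_le_ell[OF bruhat_le_if_schubert_nonzero[OF w x_Sn]] by blast
    then show False
      using bruhat_le_ell[OF x(2)] v(2) by linarith
  qed
  ultimately have w_le: "bruhat_le n w (?r \<circ> x)"
    using bruhat_le_if_schubert_nonzero[OF w rx_Sn] by blast
  have "ell n (?r \<circ> x) \<le> ell n x + 1"
    by (rule ell_adjacent_transpose_comp_le[OF x_Sn i])
  then have ell_eqs: "ell n v \<le> ell n x" "ell n (?r \<circ> x) \<le> ell n w" "ell n v + 1 = ell n w"
    using bruhat_le_ell[OF x(2)] bruhat_le_ell[OF w_le] v(2) by linarith+
  then have "x = v" "w = ?r \<circ> x"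
    using bruhat_le_eq_if_ell_le[OF x(2)] bruhat_le_eq_if_ell_le[OF w_le] by auto
  then show ?thesis
    using ell_eqs(3) by auto
qed

lemma schubert_divided_difference:
  assumes w: "w \<in> Sn n" and i: "1 \<le> i" "Suc i \<le> n"
  obtains k where "\<forall>v\<in>Sn n. in_ring n (k v)"
    and "\<And>v. v \<in> Sn n \<Longrightarrow> k v \<noteq> 0 \<Longrightarrow>
      v = transpose i (Suc i) \<circ> w \<and> ell n v + 1 = ell n w \<and> homogeneous 0 (k v)"
    and "\<And>u. u \<in> Sn n \<Longrightarrow> \<sigma> w u - weyl_act (transpose i (Suc i)) (\<sigma> w) u =
      (var i - var (Suc i)) * (\<Sum>v\<in>Sn n. k v * \<sigma> v u)"
proof -
  let ?r = "transpose i (Suc i)" and ?\<alpha> = "var i - var (Suc i)"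
  have "\<forall>u\<in>Sn n. \<exists>q. in_ring n q \<and> \<sigma> w u - weyl_act ?r (\<sigma> w) u = ?\<alpha> * q"
    using ring_dvd_sub_weyl_act_transpose[OF gkm_schubert[OF w] _ i(1) lessI i(2)]
    by (auto simp: ring_dvd_def mult.commute)
  then obtain h where h: "\<And>u. u \<in> Sn n \<Longrightarrow> in_ring n (h u)"
    and h_eq: "\<And>u. u \<in> Sn n \<Longrightarrow> \<sigma> w u - weyl_act ?r (\<sigma> w) u = ?\<alpha> * h u"
    by metis
  have h_hom: "homogeneous (ell n w - 1) (h u)" and ell_w: "h u \<noteq> 0 \<Longrightarrow> 1 \<le> ell n w"
    if "u \<in> Sn n" for u
    using homogeneous_divided_difference[OF homogeneous_schubert[OF w] i(1) lessI i(2) that h_eq[OF that]]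
    by auto
  obtain k where k_ring: "\<forall>v\<in>Sn n. in_ring n (k v)"
    and k_supp: "\<forall>v\<in>Sn n. k v \<noteq> 0 \<longrightarrow> v \<in> support_upset n h \<and> ell n v \<le> ell n w - 1 \<and>
      homogeneous (ell n w - 1 - ell n v) (k v)"
    and k_sum: "\<forall>u\<in>Sn n. h u = (\<Sum>v\<in>Sn n. k v * \<sigma> v u)"
    using gkm_schubert_expansion[OF gkm_divided_difference[OF gkm_schubert[OF w] i(1) lessI i(2) h h_eq] h_hom]
    by blast
  have "v = ?r \<circ> w \<and> ell n v + 1 = ell n w \<and> homogeneous 0 (k v)" if "v \<in> Sn n" "k v \<noteq> 0" for v
  proof -
    have v: "v \<in> support_upset n h" "ell n v \<le> ell n w - 1"
      using k_supp that by auto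
    then obtain x where "h x \<noteq> 0" "x \<in> Sn n"
      by (auto simp: support_upset_def dest: bruhat_le_imp)
    then have "ell n v < ell n w"
      using ell_w v(2) by fastforce
    then show ?thesis
      using support_upset_divided_difference[OF w i h_eq v(1)] k_supp that by auto
  qed
  moreover have "\<sigma> w u - weyl_act ?r (\<sigma> w) u = ?\<alpha> * (\<Sum>v\<in>Sn n. k v * \<sigma> v u)" if "u \<in> Sn n" for u
    using h_eq[OF that] k_sum that by simp
  ultimately show ?thesis
    using that k_ring by blast
qed

definition unitriangular_expansion :: "(nat \<Rightarrow> nat) \<Rightarrow> (nat \<Rightarrow> nat) \<Rightarrow> ((nat \<Rightarrow> nat) \<Rightarrow> mpoly) \<Rightarrow> bool"
  where "unitriangular_expansion s w c \<longleftrightarrow>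
    (\<forall>v\<in>Sn n. in_ring n (c v)) \<and>
    (\<forall>v\<in>Sn n. c v \<noteq> 0 \<longrightarrow> bruhat_le n v w \<and> homogeneous (ell n w - ell n v) (c v)) \<and>
    c w = 1 \<and>
    (\<forall>u\<in>Sn n. weyl_act s (\<sigma> w) u = (\<Sum>v\<in>Sn n. c v * \<sigma> v u))"

lemma unitriangular_expansion_id:
  assumes "w \<in> Sn n"
  shows "unitriangular_expansion id w (\<lambda>v. if v = w then 1 else 0)"
proof -
  have "(\<Sum>v\<in>Sn n. (if v = w then 1 else 0) * \<sigma> v u) = (\<Sum>v\<in>Sn n. if v = w then \<sigma> v u else 0)" for u
    by (rule sum.cong) auto
  then show ?thesis
    using assms bruhat_le_refl by (simp add: unitriangular_expansion_def weyl_act_id)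
qed

lemma unitriangular_expansion_simple_reflection:
  assumes w: "w \<in> Sn n" and i: "1 \<le> i" "Suc i \<le> n"
  shows "\<exists>c. unitriangular_expansion (transpose i (Suc i)) w c"
proof -
  let ?r = "transpose i (Suc i)" and ?\<alpha> = "var i - var (Suc i)"
  obtain k where k_ring: "\<forall>v\<in>Sn n. in_ring n (k v)"
    and k_supp: "\<And>v. v \<in> Sn n \<Longrightarrow> k v \<noteq> 0 \<Longrightarrow> v = ?r \<circ> w \<and> ell n v + 1 = ell n w \<and> homogeneous 0 (k v)"
    and k_sum: "\<And>u. u \<in> Sn n \<Longrightarrow> \<sigma> w u - weyl_act ?r (\<sigma> w) u = ?\<alpha> * (\<Sum>v\<in>Sn n. k v * \<sigma> v u)"
    using schubert_divided_difference[OF w i] by blast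
  have "k w = 0"
    using k_supp[OF w] by fastforce
  define c where "c v = (if v = w then 1 else 0) - ?\<alpha> * k v" for v
  have c_supp: "bruhat_le n v w \<and> homogeneous (ell n w - ell n v) (c v)" if v: "v \<in> Sn n" "c v \<noteq> 0" for v
  proof (cases "v = w")
    case False
    then have "v = ?r \<circ> w" "ell n v + 1 = ell n w" "homogeneous 0 (k v)"
      using k_supp[OF v(1)] v(2) by (auto simp: c_def)
    then have "bruhat_le n v (?r \<circ> v)"
      by (intro bruhat_le_transpose_comp[OF v(1) i(1) lessI i(2)]) auto
    moreover have "homogeneous (1 + 0) (?\<alpha> * k v)"
      by (intro homogeneous_mult homogeneous_diff homogeneous_var \<open>homogeneous 0 (k v)\<close>)
    moreover have "ell n w - ell n v = 1"
      using \<open>ell n v + 1 = ell n w\<close> by simp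
    ultimately show ?thesis
      using False \<open>v = ?r \<circ> w\<close> by (simp add: c_def homogeneous_uminus)
  qed (simp add: c_def \<open>k w = 0\<close> bruhat_le_refl[OF w])
  have c_sum: "weyl_act ?r (\<sigma> w) u = (\<Sum>v\<in>Sn n. c v * \<sigma> v u)" if u: "u \<in> Sn n" for u
  proof -
    have "(\<Sum>v\<in>Sn n. c v * \<sigma> v u) = (\<Sum>v\<in>Sn n. (if v = w then \<sigma> v u else 0) - ?\<alpha> * (k v * \<sigma> v u))"
      by (rule sum.cong) (auto simp: c_def left_diff_distrib mult.assoc)
    also have "\<dots> = \<sigma> w u - ?\<alpha> * (\<Sum>v\<in>Sn n. k v * \<sigma> v u)"
      using w by (simp add: sum_subtractf sum_distrib_left)
    also have "\<dots> = weyl_act ?r (\<sigma> w) u"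
      by (subst k_sum[OF u, symmetric]) simp
    finally show ?thesis ..
  qed
  have "\<forall>v\<in>Sn n. in_ring n (c v)"
    using k_ring i by (auto simp: c_def intro!: in_ring_diff in_ring_uminus in_ring_mult in_ring_var)
  then have "unitriangular_expansion ?r w c"
    using c_supp c_sum \<open>k w = 0\<close> by (simp add: unitriangular_expansion_def c_def)
  then show ?thesis by blast
qed

lemma unitriangular_expansion_comp:
  assumes r: "r \<in> Sn n" and p: "p \<in> Sn n" and w: "w \<in> Sn n"
    and c: "unitriangular_expansion p w c"
    and E: "\<And>v. v \<in> Sn n \<Longrightarrow> unitriangular_expansion r v (E v)"
  shows "unitriangular_expansion (r \<circ> p) w (\<lambda>y. \<Sum>v\<in>Sn n. poly_act r (c v) * E v y)"
proof -
  let ?C = "\<lambda>y. \<Sum>v\<in>Sn n. poly_act r (c v) * E v y"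
  have term_supp: "bruhat_le n y v \<and> bruhat_le n v w \<and>
      homogeneous (ell n w - ell n y) (poly_act r (c v) * E v y)"
    if "v \<in> Sn n" "y \<in> Sn n" "poly_act r (c v) * E v y \<noteq> 0" for v y
  proof -
    have vw: "bruhat_le n v w" "homogeneous (ell n w - ell n v) (c v)"
      and yv: "bruhat_le n y v" "homogeneous (ell n v - ell n y) (E v y)"
      using c E[OF that(1)] that by (auto simp: unitriangular_expansion_def)
    have "ell n w - ell n v + (ell n v - ell n y) = ell n w - ell n y"
      using bruhat_le_ell[OF vw(1)] bruhat_le_ell[OF yv(1)] by linarith
    then show ?thesis
      using vw yv homogeneous_mult[OF homogeneous_poly_act[OF vw(2)] yv(2)] by simp
  qed
  have "?C y \<noteq> 0 \<Longrightarrow> bruhat_le n y w \<and> homogeneous (ell n w - ell n y) (?C y)" if y: "y \<in> Sn n" for y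
  proof
    assume "?C y \<noteq> 0"
    then obtain v where "v \<in> Sn n" "poly_act r (c v) * E v y \<noteq> 0"
      by (meson sum.neutral)
    then show "bruhat_le n y w"
      using term_supp y bruhat_le_trans by blast
    show "homogeneous (ell n w - ell n y) (?C y)"
      using term_supp y by (intro homogeneous_sum) (metis homogeneous_0)
  qed
  moreover have "?C w = 1"
  proof -
    have "poly_act r (c v) * E v w = (if v = w then 1 else 0)" if v: "v \<in> Sn n" for v
      using term_supp[OF v w] bruhat_le_antisym c E[OF v] by (auto simp: unitriangular_expansion_def)
    then show ?thesis
      using w by simp
  qed
  moreover have "\<forall>v\<in>Sn n. in_ring n (?C v)"
    using c E by (auto simp: unitriangular_expansion_def intro!: in_ring_sum in_ring_mult in_ring_poly_act[OF r])
  ultimately show ?thesis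
    using c E weyl_act_comp_expansion[OF r p, of \<sigma> w c E]
    by (simp add: unitriangular_expansion_def)
qed

lemma unitriangular_expansion_exists:
  assumes "s \<in> Sn n" "w \<in> Sn n"
  shows "\<exists>c. unitriangular_expansion s w c"
  using assms
proof (induction s arbitrary: w rule: Sn_adjacent_transposition_induct)
  case id
  then show ?case
    using unitriangular_expansion_id by blast
next
  case (step p i)
  have r: "transpose i (Suc i) \<in> Sn n"
    using step.hyps by (intro Sn_transpose) auto
  obtain c where c: "unitriangular_expansion p w c"
    using step.IH[OF step.prems] by blast
  have "\<forall>v\<in>Sn n. \<exists>e. unitriangular_expansion (transpose i (Suc i)) v e"
    using unitriangular_expansion_simple_reflection step.hyps by blast
  then obtain E where "\<forall>v\<in>Sn n. unitriangular_expansion (transpose i (Suc i)) v (E v)"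
    using bchoice by blast
  then show ?case
    using unitriangular_expansion_comp[OF r step.hyps(1) step.prems c] by blast
qed

lemma unitriangular_expansion_eq:
  assumes "unitriangular_expansion s w c" "w \<in> Sn n" "u \<in> Sn n"
  shows "weyl_act s (\<sigma> w) u = \<sigma> w u + (\<Sum>v\<in>{v\<in>Sn n. bruhat_less n v w}. c v * \<sigma> v u)"
proof -
  have "(\<Sum>v\<in>Sn n - {w}. c v * \<sigma> v u) = (\<Sum>v\<in>{v\<in>Sn n. bruhat_less n v w}. c v * \<sigma> v u)"
    using assms(1) by (intro sum.mono_neutral_right) (auto simp: bruhat_less_def unitriangular_expansion_def)
  then show ?thesis
    using assms by (simp add: unitriangular_expansion_def sum.remove[OF finite_Sn assms(2)])
qed

end

theorem mainTheorem6:
  fixes n :: nat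
    and \<sigma> :: "(nat \<Rightarrow> nat) \<Rightarrow> (nat \<Rightarrow> nat) \<Rightarrow> mpoly"
    and s w :: "nat \<Rightarrow> nat"
  assumes schubert: "\<forall>v\<in>Sn n. is_schubert_class n v (\<sigma> v)"
    and s: "s \<in> Sn n"
    and w: "w \<in> Sn n"
  shows "\<exists>c :: (nat \<Rightarrow> nat) \<Rightarrow> mpoly.
           (\<forall>v\<in>Sn n. bruhat_less n v w \<longrightarrow> in_ring n (c v)) \<and>
           (\<forall>v\<in>Sn n. bruhat_less n v w \<longrightarrow> c v \<noteq> 0 \<longrightarrow>
               total_degree (c v) = ell n w - ell n v) \<and>
           (\<forall>u\<in>Sn n. weyl_act s (\<sigma> w) u =
               \<sigma> w u + (\<Sum>v\<in>{v\<in>Sn n. bruhat_less n v w}. c v * \<sigma> v u))"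
proof -
  interpret schubert_classes n \<sigma>
    using schubert by unfold_locales
  obtain c where c: "unitriangular_expansion s w c"
    using unitriangular_expansion_exists[OF s w] by blast
  then have "in_ring n (c v)" "c v \<noteq> 0 \<Longrightarrow> total_degree (c v) = ell n w - ell n v" if "v \<in> Sn n" for v
    using that by (auto simp: unitriangular_expansion_def total_degree_homogeneous)
  then show ?thesis
    using unitriangular_expansion_eq[OF c w] by blast
qed

end
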